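(* Let $f:\{0,1\}^n\to\mathbb{C}$ have affine support of dimension $r$ with free variables $x_1,\dots,x_r$, where on $\mathrm{supp}(f)$ each variable satisfies $x_i\equiv\sum_{j=1}^r a_{ij}x_j+b_i \pmod 2$ ($1\le i\le n$), with $a_{ij},b_i\in\{0,1\}$, $(a_{ij})_{1\le i,j\le r}=I_r$ and $b_1=\dots=b_r=0$. Suppose \[f=\lambda\cdot\chi_{\mathrm{supp}(f)}\cdot\alpha^{L(x)+2Q(x)+4H(x)},\] where $\lambda\ne0$, $\alpha=e^{\pi i/4}$, $L(x)=\sum_{j=1}^r c_jx_j$, $Q(x)=\sum_{1\le j<k\le r}c_{jk}x_jx_k$, and $H(x)=\sum_{S\subseteq[r],|S|\ge3}c_S\prod_{j\in S}x_j$, all $c$'s integers. Then $f\in\mathscr{L}$ if and only if $H$ is homogeneous of degree 3 (i.e. $c_S\equiv0\pmod 2$ whenever $|S|\ge 4$) and the following congruences hold over $\mathbb{Z}_2$: \[\sum_{i=1}^n\prod_{j\in S}a_{ij}\equiv0 \quad\text{for all } S\subseteq[r] \text{ with } 1\le|S|\le4,\] \[\sum_{i=1}^n\Big(\prod_{j\in S}a_{ij}\Big)b_i\equiv c_S \quad\text{for all } S\subseteq[r] \text{ with } 1\le|S|\le3,\] where $c_{\{j\}}=c_j$, $c_{\{j,k\}}=c_{jk}$, $c_{\{j,k,\ell\}}=c_{jk\ell}$.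
   Context: $\chi_{\mathrm{supp}(f)}$ is the 0-1 indicator of $\mathrm{supp}(f)=\{x:f(x)\ne0\}$. In the exponent of $\alpha$ the variables $x_j\in\{0,1\}$ are integers and the expression is evaluated in $\mathbb{Z}$ (equivalently mod 8); the coefficients $c_j$ (mod 8), $c_{jk}$ (mod 4), $c_S$ for $|S|\ge3$ (mod 2) are uniquely determined by $f$. The class $\mathscr{A}$: $g\in\mathscr{A}$ iff $\mathrm{supp}(g)$ is an affine subspace of $\mathbb{Z}_2^n$ and, for free variables $x_1,\dots,x_r$ of it, $g=\mu\, i^{L'(x_1,\dots,x_r)+2Q'(x_1,\dots,x_r)}$ on the support, with $\mu\neq0$, $L'$ linear with integer coefficients, $Q'$ multilinear with integer coefficients and all monomials of degree 2 (or $g\equiv0$). $f$ of arity $n$ belongs to $\mathscr{L}$ iff for every $\sigma=s_1\cdots s_n\in\mathrm{supp}(f)$ the function $x\mapsto\alpha^{\sum_i s_ix_i}f(x)$ (integer sum) belongs to $\mathscr{A}$. *)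

theory Defs
  imports Complex_Main
begin

text \<open>Boolean vectors of length n are modelled as functions nat \<Rightarrow> bool that are
  False outside the index range {1..n}.\<close>

definition cube :: "nat \<Rightarrow> (nat \<Rightarrow> bool) set" where
  "cube n = {x. \<forall>i. x i \<longrightarrow> i \<in> {1..n}}"

definition supp :: "nat \<Rightarrow> ((nat \<Rightarrow> bool) \<Rightarrow> complex) \<Rightarrow> (nat \<Rightarrow> bool) set" where
  "supp n f = {x \<in> cube n. f x \<noteq> 0}"

definition bxor :: "(nat \<Rightarrow> bool) \<Rightarrow> (nat \<Rightarrow> bool) \<Rightarrow> (nat \<Rightarrow> bool)" where
  "bxor x y = (\<lambda>i. x i \<noteq> y i)"

definition lin_sub :: "nat \<Rightarrow> (nat \<Rightarrow> bool) set \<Rightarrow> bool" where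
  "lin_sub n W \<longleftrightarrow> W \<subseteq> cube n \<and> (\<lambda>_. False) \<in> W \<and> (\<forall>x\<in>W. \<forall>y\<in>W. bxor x y \<in> W)"

definition affine_sub :: "nat \<Rightarrow> (nat \<Rightarrow> bool) set \<Rightarrow> bool" where
  "affine_sub n S \<longleftrightarrow> (\<exists>v \<in> cube n. \<exists>W. lin_sub n W \<and> S = bxor v ` W)"

definition free_vars :: "nat \<Rightarrow> (nat \<Rightarrow> bool) set \<Rightarrow> nat set \<Rightarrow> bool" where
  "free_vars n S J \<longleftrightarrow> J \<subseteq> {1..n} \<and>
     bij_betw (\<lambda>x i. i \<in> J \<and> x i) S {y. \<forall>i. y i \<longrightarrow> i \<in> J}"

definition bit :: "bool \<Rightarrow> int" where
  "bit b = (if b then 1 else 0)"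

definition alpha :: complex where
  "alpha = cis (pi / 4)"

definition in_A :: "nat \<Rightarrow> ((nat \<Rightarrow> bool) \<Rightarrow> complex) \<Rightarrow> bool" where
  "in_A n g \<longleftrightarrow> supp n g = {} \<or>
     (affine_sub n (supp n g) \<and>
      (\<exists>J. free_vars n (supp n g) J \<and>
        (\<exists>\<mu>::complex. \<mu> \<noteq> 0 \<and> (\<exists>(l::nat \<Rightarrow> int) (q::nat \<Rightarrow> nat \<Rightarrow> int).
          \<forall>x \<in> supp n g. g x = \<mu> * \<i> powi
             ((\<Sum>j\<in>J. l j * bit (x j))
              + 2 * (\<Sum>j\<in>J. \<Sum>k\<in>J. if j < k then q j k * bit (x j) * bit (x k) else 0))))))"

definition in_L :: "nat \<Rightarrow> ((nat \<Rightarrow> bool) \<Rightarrow> complex) \<Rightarrow> bool" where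
  "in_L n f \<longleftrightarrow> (\<forall>\<sigma> \<in> supp n f.
     in_A n (\<lambda>x. alpha powi (\<Sum>i=1..n. bit (\<sigma> i) * bit (x i)) * f x))"

end

theory Submission
  imports Defs
begin

text \<open>
  Every point of the support is determined by its free coordinates \<open>Y \<subseteq> {1..r}\<close>
  (\<open>support_point Y\<close>). For \<open>\<sigma> = support_point U\<close> the function \<open>twisted U = \<alpha>^\<langle>\<sigma>,x\<rangle> f\<close> has
  the support and free variables of \<open>f\<close> and the value \<open>lam * \<alpha>^E(Y)\<close> at \<open>support_point Y\<close>,
  where \<open>E = twisted_phase U\<close>, so it lies in \<open>A\<close> exactly when \<open>E(Y) = c0 + 2 L(Y) + 4 Q(Y)\<close>
  modulo 8 for an integer linear \<open>L\<close> and quadratic \<open>Q\<close> in the indicator of \<open>Y\<close>. (If \<open>A\<close> is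
  witnessed on other free variables, each of them is the parity of an affine function of \<open>Y\<close>,
  and such parities and their doubled products are quadratic modulo 4.)

  Each coordinate of \<open>support_point Y\<close> is \<open>b\<^sub>i\<close> plus the parity of \<open>|Y \<inter> A\<^sub>i|\<close>, and
  \<open>[odd |B|] = (\<Sum>T \<subseteq> B, T \<noteq> {}. (-2)^(|T|-1))\<close> turns \<open>E(Y)\<close> into a constant plus
  \<open>\<Sum>T \<subseteq> Y, T \<noteq> {}. e(T)\<close> with \<open>e = twisted_coeff U\<close>. Multilinear expansions are unique
  modulo 8, so the condition reads \<open>2 | e(T)\<close>, \<open>4 | e(T)\<close>, \<open>8 | e(T)\<close> for \<open>|T| = 1\<close>, \<open>2\<close>, \<open>\<ge> 3\<close>,
  that is \<open>\<Sum>\<^sub>i \<sigma>\<^sub>i \<Prod>\<^sub>j\<^sub>\<in>\<^sub>T a\<^sub>i\<^sub>j = c\<^sub>T\<close> modulo 2 for \<open>|T| \<le> 3\<close> and \<open>c\<^sub>T\<close> even for \<open>|T| \<ge> 4\<close>.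
  As \<open>\<sigma>\<^sub>i = b\<^sub>i + \<Sum>\<^sub>k\<^sub>\<in>\<^sub>U a\<^sub>i\<^sub>k\<close> modulo 2, the cases \<open>U = {}\<close> and \<open>U = {k}\<close> give the
  stated congruences, and these in turn give the condition for every \<open>U\<close>.
\<close>

lemma alpha_powi: "alpha powi m = cis (of_int m * (pi / 4))"
  by (simp add: alpha_def cis_power_int)

lemma alpha_nonzero: "alpha \<noteq> 0"
  by (simp add: alpha_def)

lemma alpha_powi_eq_iff: "alpha powi m1 = alpha powi m2 \<longleftrightarrow> 8 dvd (m1 - m2)"
proof -
  have "alpha powi m1 = alpha powi m2 \<longleftrightarrow>
        (\<exists>k::int. of_int m1 * (pi / 4) = of_int m2 * (pi / 4) + 2 * pi * k)"
    unfolding alpha_powi complex_eq_iff cis.sel by (metis sin_cos_eq_iff)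
  also have "\<dots> \<longleftrightarrow> (\<exists>k::int. m1 - m2 = 8 * k)"
  proof (intro ex_cong1)
    fix k :: int
    have "of_int m1 * (pi / 4) = of_int m2 * (pi / 4) + 2 * pi * of_int k
          \<longleftrightarrow> pi * of_int (m1 - m2) = pi * of_int (8 * k)"
      by (simp add: field_simps)
    then show "of_int m1 * (pi / 4) = of_int m2 * (pi / 4) + 2 * pi * of_int k \<longleftrightarrow> m1 - m2 = 8 * k"
      by (simp only: mult_cancel_left pi_neq_zero of_int_eq_iff simp_thms)
  qed
  also have "\<dots> \<longleftrightarrow> 8 dvd (m1 - m2)"
    by (simp add: dvd_def)
  finally show ?thesis .
qed

lemma i_powi_eq_alpha_powi: "\<i> powi k = alpha powi (2 * k)"
  by (simp add: alpha_powi cis_power_int flip: cis_pi_half) (simp add: algebra_simps)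

section \<open>Expansions over subsets\<close>

lemma sum_Pow_neg2_power_card:
  "finite B \<Longrightarrow> (\<Sum>T\<in>Pow B. (-2::int) ^ card T) = (-1) ^ card B"
  using prod_add[of B "\<lambda>_. -2::int" "\<lambda>_. 1"] by simp

lemma bit_odd_card:
  assumes "finite B"
  shows "bit (odd (card B)) = (\<Sum>T\<in>Pow B - {{}}. (-2::int) ^ (card T - 1))"
proof -
  have "(\<Sum>T\<in>Pow B - {{}}. (-2::int) ^ card T) = (\<Sum>T\<in>Pow B - {{}}. -2 * (-2) ^ (card T - 1))"
  proof (rule sum.cong)
    fix T assume "T \<in> Pow B - {{}}"
    then have "finite T" "T \<noteq> {}" using assms finite_subset by auto
    then have "card T \<noteq> 0" by simp
    then show "(-2::int) ^ card T = -2 * (-2) ^ (card T - 1)"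
      by (metis Suc_pred' gr0I power_Suc)
  qed simp
  moreover have "(\<Sum>T\<in>Pow B. (-2::int) ^ card T) = 1 + (\<Sum>T\<in>Pow B - {{}}. (-2) ^ card T)"
    using assms by (simp add: sum.remove[of "Pow B" "{}"])
  ultimately have "(-1::int) ^ card B = 1 - 2 * (\<Sum>T\<in>Pow B - {{}}. (-2) ^ (card T - 1))"
    using sum_Pow_neg2_power_card[OF assms] by (simp add: sum_distrib_left sum_negf)
  then show ?thesis
    unfolding bit_def by (cases "odd (card B)") auto
qed

text \<open>Uniqueness of multilinear expansions modulo \<open>m\<close>.\<close>

lemma dvd_coeff_of_dvd_subset_sums:
  fixes d :: "'a set \<Rightarrow> 'b :: comm_ring_1"
  assumes "finite R" and sums: "\<And>Y. Y \<subseteq> R \<Longrightarrow> m dvd (\<Sum>T\<in>Pow Y - {{}}. d T)"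
  shows "T \<subseteq> R \<Longrightarrow> T \<noteq> {} \<Longrightarrow> m dvd d T"
proof (induction "card T" arbitrary: T rule: less_induct)
  case (less T)
  have "finite T" using less.prems assms(1) finite_subset by auto
  have "m dvd (\<Sum>T'\<in>Pow T - {{}} - {T}. d T')"
  proof (rule dvd_sum)
    fix T' assume T': "T' \<in> Pow T - {{}} - {T}"
    then have "card T' < card T" using \<open>finite T\<close> by (auto intro: psubset_card_mono)
    then show "m dvd d T'" using less T' by auto
  qed
  moreover have "(\<Sum>T'\<in>Pow T - {{}}. d T') = d T + (\<Sum>T'\<in>Pow T - {{}} - {T}. d T')"
    using \<open>finite T\<close> less.prems by (simp add: sum.remove[of "Pow T - {{}}" T])
  ultimately show ?case using sums[OF less.prems(1)] by (metis dvd_add_left_iff)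
qed

lemma sum_singletons_Pow:
  assumes "finite Y"
  shows "(\<Sum>T\<in>{T\<in>Pow Y. card T = 1}. h T) = (\<Sum>j\<in>Y. h {j})"
proof -
  have "{T\<in>Pow Y. card T = 1} = (\<lambda>j. {j}) ` Y" by (auto simp: card_1_singleton_iff)
  then show ?thesis by (simp add: sum.reindex)
qed

lemma sum_doubletons_Pow:
  fixes Y :: "'a :: linorder set"
  assumes "finite Y"
  shows "(\<Sum>T\<in>{T\<in>Pow Y. card T = 2}. h T) = (\<Sum>j\<in>Y. \<Sum>k\<in>Y. if j < k then h {j, k} else 0)"
proof -
  let ?P = "{p\<in>Y \<times> Y. fst p < snd p}"
  have inj: "inj_on (\<lambda>p. {fst p, snd p}) ?P"
    by (rule inj_onI) (auto simp: doubleton_eq_iff)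
  have image: "(\<lambda>p. {fst p, snd p}) ` ?P = {T\<in>Pow Y. card T = 2}"
  proof (intro equalityI subsetI)
    fix T assume "T \<in> {T\<in>Pow Y. card T = 2}"
    then obtain x y where "T = {x, y}" "x \<noteq> y" "x \<in> Y" "y \<in> Y"
      by (auto simp: card_2_iff)
    then have "T = {min x y, max x y}" "(min x y, max x y) \<in> ?P"
      by (auto simp: min_def max_def)
    then show "T \<in> (\<lambda>p. {fst p, snd p}) ` ?P"
      by (intro image_eqI[where x = "(min x y, max x y)"]) simp_all
  qed auto
  have "(\<Sum>T\<in>{T\<in>Pow Y. card T = 2}. h T) = (\<Sum>p\<in>?P. h {fst p, snd p})"
    using sum.reindex[OF inj, of h] image by (simp add: o_def)
  also have "\<dots> = (\<Sum>p\<in>Y \<times> Y. if fst p < snd p then h {fst p, snd p} else 0)"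
    using assms by (simp add: sum.inter_filter)
  also have "\<dots> = (\<Sum>j\<in>Y. \<Sum>k\<in>Y. if j < k then h {j, k} else 0)"
    by (simp add: sum.cartesian_product case_prod_beta)
  finally show ?thesis .
qed

lemma doubleton_Min_Max:
  fixes T :: "'a :: linorder set"
  assumes "card T = 2"
  shows "{Min T, Max T} = T"
proof -
  obtain x y where "T = {x, y}" "x \<noteq> y" using assms by (auto simp: card_2_iff)
  then show ?thesis by (cases "x < y") (auto simp: min_def max_def)
qed

lemma sum_mult_bit_mem:
  assumes "finite A" and "Y \<subseteq> A"
  shows "(\<Sum>j\<in>A. h j * bit (j \<in> Y)) = (\<Sum>j\<in>Y. h j)"
proof -
  have "(\<Sum>j\<in>A. h j * bit (j \<in> Y)) = (\<Sum>j\<in>A. if j \<in> Y then h j else 0)"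
    by (rule sum.cong) (auto simp: bit_def)
  also have "\<dots> = (\<Sum>j\<in>A \<inter> Y. h j)" using assms(1) by (rule sum.inter_restrict[symmetric])
  finally show ?thesis using assms(2) by (simp add: Int_absorb1)
qed

lemma prod_bit_mem:
  assumes "finite S"
  shows "(\<Prod>j\<in>S. bit (j \<in> Y)) = bit (S \<subseteq> Y)"
  using assms by (induction S rule: finite_induct) (auto simp: bit_def)

lemma sum_square_split:
  fixes h :: "'a :: linorder \<Rightarrow> 'a \<Rightarrow> 'b :: comm_monoid_add"
  assumes "finite A"
  shows "(\<Sum>j\<in>A. \<Sum>k\<in>A. h j k)
       = (\<Sum>j\<in>A. h j j) + (\<Sum>j\<in>A. \<Sum>k\<in>A. if j < k then h j k + h k j else 0)"
proof -
  have "(\<Sum>j\<in>A. \<Sum>k\<in>A. h j k) = (\<Sum>j\<in>A. \<Sum>k\<in>A. (if j = k then h j k else 0)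
          + (if j < k then h j k else 0) + (if k < j then h j k else 0))"
    by (intro sum.cong refl) auto
  also have "\<dots> = (\<Sum>j\<in>A. h j j) + (\<Sum>j\<in>A. \<Sum>k\<in>A. if j < k then h j k else 0)
          + (\<Sum>j\<in>A. \<Sum>k\<in>A. if k < j then h j k else 0)"
    using assms by (simp add: sum.distrib)
  also have "(\<Sum>j\<in>A. \<Sum>k\<in>A. if k < j then h j k else 0) = (\<Sum>j\<in>A. \<Sum>k\<in>A. if j < k then h k j else 0)"
    by (rule sum.swap)
  finally show ?thesis
    by (simp add: sum.distrib[symmetric] add.assoc if_distrib cong: if_cong)
qed

lemma sum_sum_mult_bit_mem:
  assumes "finite A" and "Y \<subseteq> A"
  shows "(\<Sum>j\<in>A. \<Sum>k\<in>A. h j k * bit (j \<in> Y) * bit (k \<in> Y)) = (\<Sum>j\<in>Y. \<Sum>k\<in>Y. h j k)"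
proof -
  have "(\<Sum>j\<in>A. \<Sum>k\<in>A. h j k * bit (j \<in> Y) * bit (k \<in> Y))
      = (\<Sum>j\<in>A. (\<Sum>k\<in>A. h j k * bit (k \<in> Y)) * bit (j \<in> Y))"
    by (simp add: sum_distrib_left sum_distrib_right mult_ac)
  also have "\<dots> = (\<Sum>j\<in>Y. \<Sum>k\<in>Y. h j k)"
    using assms by (simp add: sum_mult_bit_mem)
  finally show ?thesis .
qed

lemma sum_pairs_mult_bit_mem:
  fixes r :: nat
  assumes "Y \<subseteq> {1..r}"
  shows "(\<Sum>j=1..r. \<Sum>k=1..r. if j < k then q j k * bit (j \<in> Y) * bit (k \<in> Y) else 0)
       = (\<Sum>T\<in>{T\<in>Pow Y. card T = 2}. q (Min T) (Max T))"
proof -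
  have "finite Y" using assms by (simp add: finite_subset)
  have "(\<Sum>j=1..r. \<Sum>k=1..r. if j < k then q j k * bit (j \<in> Y) * bit (k \<in> Y) else 0)
      = (\<Sum>j=1..r. \<Sum>k=1..r. (if j < k then q j k else 0) * bit (j \<in> Y) * bit (k \<in> Y))"
    by (intro sum.cong refl) simp
  also have "\<dots> = (\<Sum>j\<in>Y. \<Sum>k\<in>Y. if j < k then q (Min {j, k}) (Max {j, k}) else 0)"
    using assms by (simp add: sum_sum_mult_bit_mem cong: if_cong)
  also have "\<dots> = (\<Sum>T\<in>{T\<in>Pow Y. card T = 2}. q (Min T) (Max T))"
    using sum_doubletons_Pow[OF \<open>finite Y\<close>, of "\<lambda>T. q (Min T) (Max T)"] by simp
  finally show ?thesis .
qed

lemma sum_subsets_mult_prod_bit_mem: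
  fixes r :: nat
  assumes "Y \<subseteq> {1..r}"
  shows "(\<Sum>S\<in>{S. S \<subseteq> {1..r} \<and> 3 \<le> card S}. m S * (\<Prod>j\<in>S. bit (j \<in> Y)))
       = (\<Sum>T\<in>{T\<in>Pow Y. 3 \<le> card T}. m T)"
proof -
  have "(\<Sum>S\<in>{S. S \<subseteq> {1..r} \<and> 3 \<le> card S}. m S * (\<Prod>j\<in>S. bit (j \<in> Y)))
      = (\<Sum>S\<in>{S. S \<subseteq> {1..r} \<and> 3 \<le> card S}. if S \<subseteq> Y then m S else 0)"
  proof (rule sum.cong)
    fix S assume "S \<in> {S. S \<subseteq> {1..r} \<and> 3 \<le> card S}"
    then have "finite S" using finite_subset[of S "{1..r}"] by auto
    then show "m S * (\<Prod>j\<in>S. bit (j \<in> Y)) = (if S \<subseteq> Y then m S else 0)"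
      by (simp only: prod_bit_mem) (simp add: bit_def)
  qed simp
  also have "\<dots> = (\<Sum>T\<in>{S. S \<subseteq> {1..r} \<and> 3 \<le> card S} \<inter> {S. S \<subseteq> Y}. m T)"
    by (simp add: sum.inter_restrict)
  also have "{S. S \<subseteq> {1..r} \<and> 3 \<le> card S} \<inter> {S. S \<subseteq> Y} = {T\<in>Pow Y. 3 \<le> card T}"
    using assms by auto
  finally show ?thesis .
qed

definition multilinear_coeff ::
    "(nat \<Rightarrow> int) \<Rightarrow> (nat \<Rightarrow> nat \<Rightarrow> int) \<Rightarrow> (nat set \<Rightarrow> int) \<Rightarrow> nat set \<Rightarrow> int" where
  "multilinear_coeff l q m T =
     (if card T = 1 then l (the_elem T) else if card T = 2 then q (Min T) (Max T) else m T)"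

lemma multilinear_eq_sum_coeffs:
  fixes r :: nat
  assumes Y: "Y \<subseteq> {1..r}"
  shows "(\<Sum>j=1..r. l j * bit (j \<in> Y))
       + (\<Sum>j=1..r. \<Sum>k=1..r. if j < k then q j k * bit (j \<in> Y) * bit (k \<in> Y) else 0)
       + (\<Sum>S\<in>{S. S \<subseteq> {1..r} \<and> 3 \<le> card S}. m S * (\<Prod>j\<in>S. bit (j \<in> Y)))
       = (\<Sum>T\<in>Pow Y - {{}}. multilinear_coeff l q m T)"
proof -
  have "finite Y" using Y by (simp add: finite_subset)
  define g where "g T = (if card T = 1 then l (the_elem T) else 0)
    + (if card T = 2 then q (Min T) (Max T) else 0) + (if 3 \<le> card T then m T else 0)" for T
  have "(\<Sum>T\<in>Pow Y - {{}}. multilinear_coeff l q m T) = (\<Sum>T\<in>Pow Y - {{}}. g T)"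
  proof (rule sum.cong)
    fix T assume "T \<in> Pow Y - {{}}"
    then have "card T \<noteq> 0" using \<open>finite Y\<close> finite_subset by fastforce
    then show "multilinear_coeff l q m T = g T" unfolding multilinear_coeff_def g_def by auto
  qed simp
  also have "\<dots> = (\<Sum>T\<in>Pow Y. g T)"
    using \<open>finite Y\<close> by (simp add: sum_diff1 g_def)
  also have "\<dots> = (\<Sum>T\<in>{T\<in>Pow Y. card T = 1}. l (the_elem T))
      + (\<Sum>T\<in>{T\<in>Pow Y. card T = 2}. q (Min T) (Max T)) + (\<Sum>T\<in>{T\<in>Pow Y. 3 \<le> card T}. m T)"
    using \<open>finite Y\<close> by (simp only: g_def sum.distrib sum.inter_filter finite_Pow_iff)
  also have "(\<Sum>T\<in>{T\<in>Pow Y. card T = 1}. l (the_elem T)) = (\<Sum>j=1..r. l j * bit (j \<in> Y))"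
    using sum_singletons_Pow[OF \<open>finite Y\<close>, of "\<lambda>T. l (the_elem T)"]
      sum_mult_bit_mem[OF _ Y, of l] by simp
  also note sum_pairs_mult_bit_mem[OF Y, symmetric]
  also note sum_subsets_mult_prod_bit_mem[OF Y, symmetric]
  finally show ?thesis ..
qed

section \<open>Quadratic forms modulo 4 and 8\<close>

lemma even_add_iff_mod2_eq: "even (x + y) \<longleftrightarrow> x mod 2 = (y :: int) mod 2"
  by presburger

lemma even_bit_odd_diff: "even (bit (odd v) - v)"
  by (auto simp: bit_def)

lemma four_dvd_bit_odd_diff_square: "4 dvd (bit (odd u) - u\<^sup>2)"
proof (cases "even u")
  case True
  then obtain m where "u = 2 * m" by (auto elim: evenE)
  then show ?thesis by (simp add: bit_def power2_eq_square)
next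
  case False
  then obtain m where "u = 2 * m + 1" by (auto elim: oddE)
  then have "bit (odd u) - u\<^sup>2 = 4 * (- m * m - m)"
    by (simp add: bit_def power2_eq_square algebra_simps)
  then show ?thesis by simp
qed

lemma four_dvd_double_bit_odd_mult_diff: "4 dvd (2 * bit (odd u) * bit (odd v) - 2 * u * v)"
proof -
  obtain s where s: "bit (odd u) - u = 2 * s" using even_bit_odd_diff[of u] by (rule evenE)
  obtain t where t: "bit (odd v) - v = 2 * t" using even_bit_odd_diff[of v] by (rule evenE)
  from s t have "2 * bit (odd u) * bit (odd v) - 2 * u * v = 4 * (s * v + u * t + 2 * s * t)"
    by (simp add: algebra_simps)
  then show ?thesis by simp
qed

definition quadratic_poly :: "nat \<Rightarrow> (nat \<Rightarrow> int) \<Rightarrow> (nat \<Rightarrow> nat \<Rightarrow> int) \<Rightarrow> nat set \<Rightarrow> int" where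
  "quadratic_poly r l q Y = (\<Sum>j=1..r. l j * bit (j \<in> Y))
     + 2 * (\<Sum>j=1..r. \<Sum>k=1..r. q j k * bit (j \<in> Y) * bit (k \<in> Y))"

lemma quadratic_poly_add:
  "quadratic_poly r (\<lambda>j. l1 j + l2 j) (\<lambda>j k. q1 j k + q2 j k) Y
     = quadratic_poly r l1 q1 Y + quadratic_poly r l2 q2 Y"
  by (simp add: quadratic_poly_def sum.distrib algebra_simps)

lemma quadratic_poly_mult:
  "quadratic_poly r (\<lambda>j. m * l j) (\<lambda>j k. m * q j k) Y = m * quadratic_poly r l q Y"
  by (simp add: quadratic_poly_def sum_distrib_left algebra_simps)

lemma quadratic_poly_upper_triangular:
  "quadratic_poly r l q Y = (\<Sum>j=1..r. (l j + 2 * q j j) * bit (j \<in> Y))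
     + 2 * (\<Sum>j=1..r. \<Sum>k=1..r. if j < k then (q j k + q k j) * bit (j \<in> Y) * bit (k \<in> Y) else 0)"
proof -
  have idem: "bit P * bit P = bit P" for P by (simp add: bit_def)
  have "(\<Sum>j=1..r. \<Sum>k=1..r. q j k * bit (j \<in> Y) * bit (k \<in> Y))
      = (\<Sum>j=1..r. q j j * bit (j \<in> Y) * bit (j \<in> Y))
        + (\<Sum>j=1..r. \<Sum>k=1..r. if j < k then q j k * bit (j \<in> Y) * bit (k \<in> Y)
                                        + q k j * bit (k \<in> Y) * bit (j \<in> Y) else 0)"
    by (rule sum_square_split) simp
  also have "(\<Sum>j=1..r. q j j * bit (j \<in> Y) * bit (j \<in> Y)) = (\<Sum>j=1..r. q j j * bit (j \<in> Y))"
    by (simp add: idem mult.assoc)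
  also have "(\<Sum>j=1..r. \<Sum>k=1..r. if j < k then q j k * bit (j \<in> Y) * bit (k \<in> Y)
                                        + q k j * bit (k \<in> Y) * bit (j \<in> Y) else 0)
      = (\<Sum>j=1..r. \<Sum>k=1..r. if j < k then (q j k + q k j) * bit (j \<in> Y) * bit (k \<in> Y) else 0)"
    by (intro sum.cong refl) (simp add: algebra_simps)
  finally show ?thesis
    by (simp add: quadratic_poly_def distrib_left distrib_right sum.distrib sum_distrib_left mult.assoc)
qed

lemma quadratic_poly_of_bits:
  "quadratic_poly r l q {j\<in>{1..r}. x j} = (\<Sum>j\<in>{1..r}. (l j + 2 * q j j) * bit (x j))
     + 2 * (\<Sum>j\<in>{1..r}. \<Sum>k\<in>{1..r}. if j < k then (q j k + q k j) * bit (x j) * bit (x k) else 0)"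
proof -
  have mem: "bit (j \<in> {j\<in>{1..r}. x j}) = bit (x j)" if "j \<in> {1..r}" for j
    using that by simp
  have "(\<Sum>j=1..r. (l j + 2 * q j j) * bit (j \<in> {j\<in>{1..r}. x j})) = (\<Sum>j\<in>{1..r}. (l j + 2 * q j j) * bit (x j))"
    using mem by (intro sum.cong) auto
  moreover have "(\<Sum>j=1..r. \<Sum>k=1..r. if j < k then (q j k + q k j) * bit (j \<in> {j\<in>{1..r}. x j})
                                          * bit (k \<in> {j\<in>{1..r}. x j}) else 0)
      = (\<Sum>j\<in>{1..r}. \<Sum>k\<in>{1..r}. if j < k then (q j k + q k j) * bit (x j) * bit (x k) else 0)"
    using mem by (intro sum.cong refl) auto
  ultimately show ?thesis unfolding quadratic_poly_upper_triangular by simp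
qed

definition quadratic_mod4 :: "nat \<Rightarrow> (nat set \<Rightarrow> int) \<Rightarrow> bool" where
  "quadratic_mod4 r F \<longleftrightarrow>
     (\<exists>c0 l q. \<forall>Y\<subseteq>{1..r}. 4 dvd (F Y - (c0 + quadratic_poly r l q Y)))"

lemma quadratic_mod4I:
  assumes "\<And>Y. Y \<subseteq> {1..r} \<Longrightarrow> F Y = c0 + quadratic_poly r l q Y"
  shows "quadratic_mod4 r F"
  unfolding quadratic_mod4_def using assms by (intro exI[of _ c0] exI[of _ l] exI[of _ q]) simp

lemma quadratic_mod4_cong:
  assumes "\<And>Y. Y \<subseteq> {1..r} \<Longrightarrow> 4 dvd (F Y - G Y)" and "quadratic_mod4 r G"
  shows "quadratic_mod4 r F"
proof -
  obtain c0 l q where h: "\<forall>Y\<subseteq>{1..r}. 4 dvd (G Y - (c0 + quadratic_poly r l q Y))"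
    using assms(2) unfolding quadratic_mod4_def by blast
  have "4 dvd (F Y - (c0 + quadratic_poly r l q Y))" if "Y \<subseteq> {1..r}" for Y
    using dvd_add[OF assms(1)[OF that] h[rule_format, OF that]] by (simp add: algebra_simps)
  then show ?thesis unfolding quadratic_mod4_def by blast
qed

lemma quadratic_mod4_add:
  assumes "quadratic_mod4 r F" and "quadratic_mod4 r G"
  shows "quadratic_mod4 r (\<lambda>Y. F Y + G Y)"
proof -
  obtain c1 l1 q1 where 1: "\<forall>Y\<subseteq>{1..r}. 4 dvd (F Y - (c1 + quadratic_poly r l1 q1 Y))"
    using assms(1) unfolding quadratic_mod4_def by blast
  obtain c2 l2 q2 where 2: "\<forall>Y\<subseteq>{1..r}. 4 dvd (G Y - (c2 + quadratic_poly r l2 q2 Y))"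
    using assms(2) unfolding quadratic_mod4_def by blast
  have "4 dvd (F Y + G Y - (c1 + c2 + quadratic_poly r (\<lambda>j. l1 j + l2 j) (\<lambda>j k. q1 j k + q2 j k) Y))"
    if "Y \<subseteq> {1..r}" for Y
    using dvd_add[OF 1[rule_format, OF that] 2[rule_format, OF that]]
    by (simp add: quadratic_poly_add algebra_simps)
  then show ?thesis unfolding quadratic_mod4_def by blast
qed

lemma quadratic_mod4_mult:
  assumes "quadratic_mod4 r F"
  shows "quadratic_mod4 r (\<lambda>Y. m * F Y)"
proof -
  obtain c0 l q where h: "\<forall>Y\<subseteq>{1..r}. 4 dvd (F Y - (c0 + quadratic_poly r l q Y))"
    using assms unfolding quadratic_mod4_def by blast
  have "4 dvd (m * F Y - (m * c0 + quadratic_poly r (\<lambda>j. m * l j) (\<lambda>j k. m * q j k) Y))"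
    if "Y \<subseteq> {1..r}" for Y
    using dvd_mult[OF h[rule_format, OF that], of m] by (simp add: quadratic_poly_mult algebra_simps)
  then show ?thesis unfolding quadratic_mod4_def by blast
qed

lemma quadratic_mod4_sum:
  assumes "finite I" and "\<And>i. i \<in> I \<Longrightarrow> quadratic_mod4 r (F i)"
  shows "quadratic_mod4 r (\<lambda>Y. \<Sum>i\<in>I. F i Y)"
  using assms
proof (induction I rule: finite_induct)
  case empty
  show ?case by (rule quadratic_mod4I[of _ _ 0 "\<lambda>_. 0" "\<lambda>_ _. 0"]) (simp add: quadratic_poly_def)
next
  case (insert i I)
  then show ?case using quadratic_mod4_add[of r "F i"] by simp
qed

lemma square_sum_mult_bit:
  "(\<Sum>j=1..r. u j * bit (j \<in> Y))\<^sup>2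
     = quadratic_poly r (\<lambda>j. u j * u j) (\<lambda>j k. if j < k then u j * u k else 0) Y"
proof -
  have idem: "bit P * bit P = bit P" for P by (simp add: bit_def)
  have "(\<Sum>j=1..r. u j * bit (j \<in> Y))\<^sup>2 = (\<Sum>j=1..r. \<Sum>k=1..r. u j * u k * bit (j \<in> Y) * bit (k \<in> Y))"
    by (simp add: power2_eq_square sum_product mult_ac)
  also have "\<dots> = (\<Sum>j=1..r. u j * u j * bit (j \<in> Y) * bit (j \<in> Y))
        + (\<Sum>j=1..r. \<Sum>k=1..r. if j < k then u j * u k * bit (j \<in> Y) * bit (k \<in> Y)
                                        + u k * u j * bit (k \<in> Y) * bit (j \<in> Y) else 0)"
    by (rule sum_square_split) simp
  also have "(\<Sum>j=1..r. u j * u j * bit (j \<in> Y) * bit (j \<in> Y)) = (\<Sum>j=1..r. u j * u j * bit (j \<in> Y))"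
    by (simp add: idem mult.assoc)
  also have "(\<Sum>j=1..r. \<Sum>k=1..r. if j < k then u j * u k * bit (j \<in> Y) * bit (k \<in> Y)
                                        + u k * u j * bit (k \<in> Y) * bit (j \<in> Y) else 0)
      = 2 * (\<Sum>j=1..r. \<Sum>k=1..r. (if j < k then u j * u k else 0) * bit (j \<in> Y) * bit (k \<in> Y))"
    unfolding sum_distrib_left by (intro sum.cong refl) (simp add: mult_ac)
  finally show ?thesis by (simp add: quadratic_poly_def)
qed

text \<open>The parity of an affine function is congruent mod 4 to its square.\<close>

lemma quadratic_mod4_bit_odd:
  "quadratic_mod4 r (\<lambda>Y. bit (odd ((\<Sum>j=1..r. u j * bit (j \<in> Y)) + v)))"
proof (rule quadratic_mod4_cong)
  let ?L = "\<lambda>Y. \<Sum>j=1..r. u j * bit (j \<in> Y)"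
  show "4 dvd (bit (odd (?L Y + v)) - (?L Y + v)\<^sup>2)" for Y
    by (rule four_dvd_bit_odd_diff_square)
  have "(?L Y + v)\<^sup>2 = v\<^sup>2 + quadratic_poly r (\<lambda>j. 2 * v * u j + u j * u j)
                                  (\<lambda>j k. 0 + (if j < k then u j * u k else 0)) Y" for Y
    unfolding quadratic_poly_add square_sum_mult_bit[symmetric]
    by (simp add: quadratic_poly_def power2_sum sum_distrib_left algebra_simps)
  then show "quadratic_mod4 r (\<lambda>Y. (?L Y + v)\<^sup>2)"
    by (intro quadratic_mod4I)
qed

lemma quadratic_mod4_double_bit_odd_mult:
  "quadratic_mod4 r (\<lambda>Y. 2 * bit (odd ((\<Sum>j=1..r. u j * bit (j \<in> Y)) + v))
                          * bit (odd ((\<Sum>j=1..r. u' j * bit (j \<in> Y)) + v')))"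
proof (rule quadratic_mod4_cong)
  let ?L = "\<lambda>Y. \<Sum>j=1..r. u j * bit (j \<in> Y)" and ?L' = "\<lambda>Y. \<Sum>j=1..r. u' j * bit (j \<in> Y)"
  show "4 dvd (2 * bit (odd (?L Y + v)) * bit (odd (?L' Y + v')) - 2 * (?L Y + v) * (?L' Y + v'))" for Y
    by (rule four_dvd_double_bit_odd_mult_diff)
  have "?L Y * ?L' Y = (\<Sum>j=1..r. \<Sum>k=1..r. u j * u' k * bit (j \<in> Y) * bit (k \<in> Y))" for Y
    by (simp add: sum_product mult_ac)
  then have "2 * (?L Y + v) * (?L' Y + v')
      = 2 * v * v' + quadratic_poly r (\<lambda>j. 2 * v' * u j + 2 * v * u' j) (\<lambda>j k. u j * u' k) Y" for Y
    by (simp add: quadratic_poly_def sum.distrib sum_distrib_left algebra_simps)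
  then show "quadratic_mod4 r (\<lambda>Y. 2 * (?L Y + v) * (?L' Y + v'))"
    by (intro quadratic_mod4I)
qed

text \<open>The shape of the \<open>alpha\<close>-exponents of the functions \<open>mu * \<i>^(L + 2 Q)\<close> in \<open>A\<close>.\<close>

definition phase_form_mod8 :: "nat \<Rightarrow> (nat set \<Rightarrow> int) \<Rightarrow> bool" where
  "phase_form_mod8 r F \<longleftrightarrow>
     (\<exists>c0 l q. \<forall>Y\<subseteq>{1..r}. 8 dvd (F Y - (c0 + 2 * quadratic_poly r l q Y)))"

definition coeff_modulus :: "nat \<Rightarrow> int" where
  "coeff_modulus k = (if k = 1 then 2 else if k = 2 then 4 else 8)"

definition phase_weight :: "nat \<Rightarrow> int" where
  "phase_weight k = (if k = 1 then 1 else if k = 2 then 2 else 4)"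

abbreviation double_quadratic_coeff :: "(nat \<Rightarrow> int) \<Rightarrow> (nat \<Rightarrow> nat \<Rightarrow> int) \<Rightarrow> nat set \<Rightarrow> int" where
  "double_quadratic_coeff l q \<equiv> multilinear_coeff (\<lambda>j. 2 * l j + 4 * q j j) (\<lambda>j k. 4 * (q j k + q k j)) (\<lambda>_. 0)"

lemma double_quadratic_poly_eq_sum_coeffs:
  fixes r :: nat
  assumes "Y \<subseteq> {1..r}"
  shows "2 * quadratic_poly r l q Y = (\<Sum>T\<in>Pow Y - {{}}. double_quadratic_coeff l q T)"
proof -
  have "2 * quadratic_poly r l q Y = (\<Sum>j=1..r. (2 * l j + 4 * q j j) * bit (j \<in> Y))
      + (\<Sum>j=1..r. \<Sum>k=1..r. if j < k then 4 * (q j k + q k j) * bit (j \<in> Y) * bit (k \<in> Y) else 0)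
      + (\<Sum>S\<in>{S. S \<subseteq> {1..r} \<and> 3 \<le> card S}. 0 * (\<Prod>j\<in>S. bit (j \<in> Y)))"
    unfolding quadratic_poly_upper_triangular
    by (simp add: sum_distrib_left sum.distrib algebra_simps if_distrib cong: if_cong)
  then show ?thesis by (simp only: multilinear_eq_sum_coeffs[OF assms])
qed

lemma coeff_modulus_dvd_double_quadratic_coeff:
  "coeff_modulus (card T) dvd double_quadratic_coeff l q T"
  by (auto simp: coeff_modulus_def multilinear_coeff_def)

lemma dvd_double_quadratic_coeff_diff:
  assumes "\<And>T. T \<subseteq> {1..r} \<Longrightarrow> T \<noteq> {} \<Longrightarrow> coeff_modulus (card T) dvd e T"
  defines "l \<equiv> \<lambda>j. e {j} div 2" and "q \<equiv> \<lambda>j k. if j < k then e {j, k} div 4 else 0"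
  assumes "T \<subseteq> {1..r}" and "T \<noteq> {}"
  shows "8 dvd (e T - double_quadratic_coeff l q T)"
proof -
  have dvd: "coeff_modulus (card T) dvd e T" using assms by blast
  consider "card T = 1" | "card T = 2" | "card T \<noteq> 1" "card T \<noteq> 2" by blast
  then show ?thesis
  proof cases
    case 1
    then obtain j where "T = {j}" by (auto simp: card_1_singleton_iff)
    then show ?thesis using dvd by (simp add: coeff_modulus_def multilinear_coeff_def l_def q_def)
  next
    case 2
    then obtain j k where "T = {j, k}" "j < k"
      by (auto simp: card_2_iff) (metis insert_commute linorder_neqE_nat)
    then show ?thesis using dvd by (simp add: coeff_modulus_def multilinear_coeff_def l_def q_def)
  next
    case 3
    then show ?thesis using dvd by (simp add: coeff_modulus_def multilinear_coeff_def)
  qed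
qed

lemma coeff_modulus_dvd_8: "coeff_modulus k dvd 8"
  by (simp add: coeff_modulus_def)

lemma phase_form_mod8_iff_coeff_modulus_dvd:
  fixes r :: nat
  assumes expansion: "\<And>Y. Y \<subseteq> {1..r} \<Longrightarrow> F Y = C + (\<Sum>T\<in>Pow Y - {{}}. e T)"
  shows "phase_form_mod8 r F \<longleftrightarrow> (\<forall>T. T \<subseteq> {1..r} \<and> T \<noteq> {} \<longrightarrow> coeff_modulus (card T) dvd e T)"
proof
  assume "phase_form_mod8 r F"
  then obtain c0 l q where h: "\<forall>Y\<subseteq>{1..r}. 8 dvd (F Y - (c0 + 2 * quadratic_poly r l q Y))"
    unfolding phase_form_mod8_def by blast
  have diff: "F Y - (c0 + 2 * quadratic_poly r l q Y)
      = (C - c0) + (\<Sum>T\<in>Pow Y - {{}}. e T - double_quadratic_coeff l q T)" if "Y \<subseteq> {1..r}" for Y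
    using that by (simp add: expansion double_quadratic_poly_eq_sum_coeffs sum_subtractf)
  have "8 dvd (C - c0)" using h[rule_format, of "{}"] diff[of "{}"] by simp
  moreover have "8 dvd (C - c0) + (\<Sum>T\<in>Pow Y - {{}}. e T - double_quadratic_coeff l q T)"
    if "Y \<subseteq> {1..r}" for Y
    using h[rule_format, OF that] diff[OF that] by simp
  ultimately have "8 dvd (\<Sum>T\<in>Pow Y - {{}}. e T - double_quadratic_coeff l q T)"
    if "Y \<subseteq> {1..r}" for Y
    using that by (simp add: dvd_add_right_iff)
  then have coeff_diff: "8 dvd (e T - double_quadratic_coeff l q T)" if "T \<subseteq> {1..r}" "T \<noteq> {}" for T
    using dvd_coeff_of_dvd_subset_sums[of "{1..r}"] that by blast
  show "\<forall>T. T \<subseteq> {1..r} \<and> T \<noteq> {} \<longrightarrow> coeff_modulus (card T) dvd e T"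
  proof (intro allI impI)
    fix T assume "T \<subseteq> {1..r} \<and> T \<noteq> {}"
    then have "coeff_modulus (card T) dvd (e T - double_quadratic_coeff l q T)"
      using dvd_trans[OF coeff_modulus_dvd_8 coeff_diff] by blast
    from dvd_add[OF this coeff_modulus_dvd_double_quadratic_coeff[of T l q]]
    show "coeff_modulus (card T) dvd e T" by simp
  qed
next
  assume h: "\<forall>T. T \<subseteq> {1..r} \<and> T \<noteq> {} \<longrightarrow> coeff_modulus (card T) dvd e T"
  define l where "l j = e {j} div 2" for j
  define q where "q j k = (if j < k then e {j, k} div 4 else 0)" for j k
  have "8 dvd (F Y - (C + 2 * quadratic_poly r l q Y))" if "Y \<subseteq> {1..r}" for Y
  proof -
    have "F Y - (C + 2 * quadratic_poly r l q Y) = (\<Sum>T\<in>Pow Y - {{}}. e T - double_quadratic_coeff l q T)"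
      using that by (simp add: expansion double_quadratic_poly_eq_sum_coeffs sum_subtractf)
    also have "8 dvd \<dots>"
      using h that unfolding l_def q_def by (intro dvd_sum dvd_double_quadratic_coeff_diff) auto
    finally show ?thesis .
  qed
  then show "phase_form_mod8 r F" unfolding phase_form_mod8_def by blast
qed

lemma coeff_modulus_dvd_iff_parity:
  assumes "k \<noteq> 0"
  shows "coeff_modulus k dvd ((z - 2 * w) * (-2) ^ (k - 1) + phase_weight k * c)
     \<longleftrightarrow> (if k \<le> 3 then even (z + c) else even c)"
proof -
  have "k = 1 \<or> k = 2 \<or> k = 3 \<or> (\<exists>m. k = 4 + m)" using assms by presburger
  then show ?thesis
  proof (elim disjE exE)
    fix m assume k: "k = 4 + m"
    then have "k - 1 = Suc (Suc (Suc m))" by simp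
    then have "(z - 2 * w) * (-2) ^ (k - 1) = 8 * (- (z - 2 * w) * (-2) ^ m)"
      by (simp only: power_Suc)
    moreover have "coeff_modulus k = 8" "phase_weight k = 4" "\<not> k \<le> 3"
      using k by (simp_all add: coeff_modulus_def phase_weight_def)
    moreover have "8 dvd 8 * y + 4 * c \<longleftrightarrow> even c" for y :: int by presburger
    ultimately show ?thesis by (simp only: if_False)
  qed (simp add: coeff_modulus_def phase_weight_def, presburger?)+
qed

section \<open>Functions with affine support\<close>

locale affine_support_phase =
  fixes n r :: nat
    and f :: "(nat \<Rightarrow> bool) \<Rightarrow> complex"
    and a :: "nat \<Rightarrow> nat \<Rightarrow> int" and b :: "nat \<Rightarrow> int"
    and c :: "nat set \<Rightarrow> int"
    and lam :: complex
  assumes rn: "r \<le> n"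
    and a01: "\<forall>i\<in>{1..n}. \<forall>j\<in>{1..r}. a i j \<in> {0, 1}"
    and b01: "\<forall>i\<in>{1..n}. b i \<in> {0, 1}"
    and aI: "\<forall>i\<in>{1..r}. \<forall>j\<in>{1..r}. a i j = (if i = j then 1 else 0)"
    and b0: "\<forall>i\<in>{1..r}. b i = 0"
    and supp_f: "supp n f = {x \<in> cube n. \<forall>i\<in>{1..n}.
                    x i = odd ((\<Sum>j=1..r. a i j * bit (x j)) + b i)}"
    and lam: "lam \<noteq> 0"
    and f_form: "\<forall>x \<in> cube n. f x =
        (if x \<in> supp n f then
           lam * alpha powi
             ((\<Sum>j=1..r. c {j} * bit (x j))
              + 2 * (\<Sum>j=1..r. \<Sum>k=1..r. if j < k then c {j, k} * bit (x j) * bit (x k) else 0)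
              + 4 * (\<Sum>S \<in> {S. S \<subseteq> {1..r} \<and> 3 \<le> card S}. c S * (\<Prod>j\<in>S. bit (x j))))
         else 0)"
begin

lemma a_01: "i \<in> {1..n} \<Longrightarrow> j \<in> {1..r} \<Longrightarrow> a i j = 0 \<or> a i j = 1"
  using a01 by blast

lemma b_01: "i \<in> {1..n} \<Longrightarrow> b i = 0 \<or> b i = 1"
  using b01 by blast

definition support_point :: "nat set \<Rightarrow> nat \<Rightarrow> bool" where
  "support_point Y = (\<lambda>i. i \<in> {1..n} \<and> odd ((\<Sum>j=1..r. a i j * bit (j \<in> Y)) + b i))"

lemma support_point_free:
  assumes "Y \<subseteq> {1..r}" and "j \<in> {1..r}"
  shows "support_point Y j = (j \<in> Y)"
proof -
  have "(\<Sum>k=1..r. a j k * bit (k \<in> Y)) = (\<Sum>k=1..r. if k = j then bit (k \<in> Y) else 0)"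
    using aI assms(2) by (intro sum.cong) auto
  then show ?thesis using assms b0 rn by (simp add: support_point_def bit_def)
qed

lemma support_point_in_supp:
  assumes "Y \<subseteq> {1..r}"
  shows "support_point Y \<in> supp n f"
proof -
  have "(\<Sum>j=1..r. a i j * bit (support_point Y j)) = (\<Sum>j=1..r. a i j * bit (j \<in> Y))" for i
    using support_point_free[OF assms] by (intro sum.cong) auto
  then show ?thesis unfolding supp_f by (auto simp: support_point_def cube_def)
qed

lemma support_point_of_supp:
  assumes "x \<in> supp n f"
  shows "x = support_point {j\<in>{1..r}. x j}"
proof
  fix i
  let ?Y = "{j\<in>{1..r}. x j}"
  have x: "x \<in> cube n" "\<forall>i\<in>{1..n}. x i = odd ((\<Sum>j=1..r. a i j * bit (x j)) + b i)"
    using assms unfolding supp_f by auto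
  show "x i = support_point ?Y i"
  proof (cases "i \<in> {1..n}")
    case True
    have "(\<Sum>j=1..r. a i j * bit (x j)) = (\<Sum>j=1..r. a i j * bit (j \<in> ?Y))"
      by (intro sum.cong) auto
    then show ?thesis using x(2) True unfolding support_point_def by simp
  next
    case False
    then show ?thesis using x(1) unfolding support_point_def cube_def by blast
  qed
qed

lemma supp_eq_support_points: "supp n f = support_point ` Pow {1..r}"
  using support_point_in_supp support_point_of_supp by blast

definition linear_part :: "nat set \<Rightarrow> nat \<Rightarrow> bool" where
  "linear_part Y = (\<lambda>i. i \<in> {1..n} \<and> odd (\<Sum>j=1..r. a i j * bit (j \<in> Y)))"

lemma support_point_eq_bxor: "support_point Y = bxor (support_point {}) (linear_part Y)"
  unfolding support_point_def linear_part_def bxor_def by (auto simp: bit_def)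

lemma bxor_linear_part:
  "bxor (linear_part Y1) (linear_part Y2) = linear_part ((Y1 - Y2) \<union> (Y2 - Y1))"
proof
  fix i
  let ?s = "\<lambda>Y. \<Sum>j=1..r. a i j * bit (j \<in> Y)"
  have "?s Y1 + ?s Y2 = ?s ((Y1 - Y2) \<union> (Y2 - Y1)) + 2 * ?s (Y1 \<inter> Y2)"
    unfolding sum_distrib_left sum.distrib[symmetric] by (intro sum.cong refl) (auto simp: bit_def)
  then have "odd (?s Y1) \<noteq> odd (?s Y2) \<longleftrightarrow> odd (?s ((Y1 - Y2) \<union> (Y2 - Y1)))"
    by presburger
  then show "bxor (linear_part Y1) (linear_part Y2) i = linear_part ((Y1 - Y2) \<union> (Y2 - Y1)) i"
    unfolding bxor_def linear_part_def by auto
qed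

lemma affine_sub_supp: "affine_sub n (supp n f)"
proof -
  define W where "W = linear_part ` Pow {1..r}"
  have "lin_sub n W"
    unfolding lin_sub_def
  proof (intro conjI ballI)
    show "W \<subseteq> cube n" unfolding W_def linear_part_def cube_def by auto
    have "linear_part {} = (\<lambda>_. False)" by (auto simp: linear_part_def bit_def)
    then show "(\<lambda>_. False) \<in> W" unfolding W_def by (intro image_eqI[where x = "{}"]) auto
    fix x y assume "x \<in> W" "y \<in> W"
    then show "bxor x y \<in> W" unfolding W_def by (auto simp: bxor_linear_part)
  qed
  moreover have "supp n f = bxor (support_point {}) ` W"
    unfolding supp_eq_support_points W_def image_image by (simp add: support_point_eq_bxor[symmetric])
  moreover have "support_point {} \<in> cube n" by (auto simp: support_point_def cube_def)
  ultimately show ?thesis unfolding affine_sub_def by blast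
qed

lemma free_vars_supp: "free_vars n (supp n f) {1..r}"
proof -
  let ?p = "\<lambda>x i. i \<in> {1..r} \<and> x i"
  have p_support_point: "?p (support_point Y) = (\<lambda>i. i \<in> Y)" if "Y \<subseteq> {1..r}" for Y
  proof
    fix i show "(i \<in> {1..r} \<and> support_point Y i) = (i \<in> Y)"
      using support_point_free[OF that, of i] that by blast
  qed
  have "inj_on ?p (supp n f)"
  proof (rule inj_onI)
    fix x y assume "x \<in> supp n f" "y \<in> supp n f" "?p x = ?p y"
    moreover from \<open>?p x = ?p y\<close> have "{j\<in>{1..r}. x j} = {j\<in>{1..r}. y j}"
      by (metis (no_types, lifting))
    ultimately show "x = y" using support_point_of_supp by metis
  qed
  moreover have "?p ` supp n f = {y. \<forall>i. y i \<longrightarrow> i \<in> {1..r}}"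
  proof (intro equalityI subsetI)
    fix y assume "y \<in> {y. \<forall>i. y i \<longrightarrow> i \<in> {1..r}}"
    then have Y: "{i. y i} \<subseteq> {1..r}" by auto
    then have "y = ?p (support_point {i. y i})" using p_support_point by auto
    then show "y \<in> ?p ` supp n f" using support_point_in_supp[OF Y] by blast
  qed auto
  ultimately show ?thesis using rn unfolding free_vars_def bij_betw_def by auto
qed

section \<open>The twisted functions\<close>

definition phase :: "(nat \<Rightarrow> bool) \<Rightarrow> int" where
  "phase x = (\<Sum>j=1..r. c {j} * bit (x j))
     + 2 * (\<Sum>j=1..r. \<Sum>k=1..r. if j < k then c {j, k} * bit (x j) * bit (x k) else 0)
     + 4 * (\<Sum>S \<in> {S. S \<subseteq> {1..r} \<and> 3 \<le> card S}. c S * (\<Prod>j\<in>S. bit (x j)))"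

lemma f_on_supp:
  assumes "x \<in> supp n f"
  shows "f x = lam * alpha powi (phase x)"
proof -
  have "x \<in> cube n" using assms by (simp add: supp_def)
  then show ?thesis using f_form assms unfolding phase_def by (simp only: Ball_def) simp
qed

definition twisted :: "nat set \<Rightarrow> (nat \<Rightarrow> bool) \<Rightarrow> complex" where
  "twisted U x = alpha powi (\<Sum>i=1..n. bit (support_point U i) * bit (x i)) * f x"

definition twisted_phase :: "nat set \<Rightarrow> nat set \<Rightarrow> int" where
  "twisted_phase U Y = (\<Sum>i=1..n. bit (support_point U i) * bit (support_point Y i))
     + phase (support_point Y)"

lemma supp_twisted: "supp n (twisted U) = supp n f"
  unfolding supp_def twisted_def by (simp add: alpha_nonzero)

lemma twisted_support_point:
  "Y \<subseteq> {1..r} \<Longrightarrow> twisted U (support_point Y) = lam * alpha powi (twisted_phase U Y)"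
  using f_on_supp[OF support_point_in_supp]
  by (simp add: twisted_def twisted_phase_def power_int_add alpha_nonzero)

lemma in_L_iff_in_A_twisted: "in_L n f \<longleftrightarrow> (\<forall>U. U \<subseteq> {1..r} \<longrightarrow> in_A n (twisted U))"
proof
  assume "in_L n f"
  then show "\<forall>U. U \<subseteq> {1..r} \<longrightarrow> in_A n (twisted U)"
    unfolding in_L_def twisted_def using support_point_in_supp by blast
next
  assume *: "\<forall>U. U \<subseteq> {1..r} \<longrightarrow> in_A n (twisted U)"
  show "in_L n f" unfolding in_L_def
  proof
    fix \<sigma> assume "\<sigma> \<in> supp n f"
    define U where "U = {j\<in>{1..r}. \<sigma> j}"
    have "\<sigma> = support_point U" unfolding U_def using \<open>\<sigma> \<in> supp n f\<close> by (rule support_point_of_supp)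
    moreover have "U \<subseteq> {1..r}" unfolding U_def by blast
    ultimately show "in_A n (\<lambda>x. alpha powi (\<Sum>i=1..n. bit (\<sigma> i) * bit (x i)) * f x)"
      using * unfolding twisted_def by blast
  qed
qed

lemma prod_column_eq_bit:
  assumes "i \<in> {1..n}" and "T \<subseteq> {1..r}"
  shows "(\<Prod>j\<in>T. a i j) = bit (T \<subseteq> {j\<in>{1..r}. a i j = 1})"
proof -
  have "finite T" using assms(2) by (simp add: finite_subset)
  have "(\<Prod>j\<in>T. a i j) = (\<Prod>j\<in>T. bit (j \<in> {j\<in>{1..r}. a i j = 1}))"
  proof (rule prod.cong)
    fix j assume "j \<in> T"
    then have "j \<in> {1..r}" using assms(2) by blast
    then show "a i j = bit (j \<in> {j\<in>{1..r}. a i j = 1})"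
      using a_01[OF assms(1)] by (auto simp: bit_def)
  qed simp
  also have "\<dots> = bit (T \<subseteq> {j\<in>{1..r}. a i j = 1})" using \<open>finite T\<close> by (rule prod_bit_mem)
  finally show ?thesis .
qed

lemma support_point_eq_odd_card:
  assumes i: "i \<in> {1..n}" and Y: "Y \<subseteq> {1..r}"
  shows "support_point Y i = odd (int (card (Y \<inter> {j\<in>{1..r}. a i j = 1})) + b i)"
proof -
  have "finite Y" using Y by (simp add: finite_subset)
  have "(\<Sum>j=1..r. a i j * bit (j \<in> Y)) = (\<Sum>j\<in>Y. a i j)"
    using Y by (simp add: sum_mult_bit_mem)
  also have "\<dots> = (\<Sum>j\<in>Y. if j \<in> {j\<in>{1..r}. a i j = 1} then 1 else 0)"
  proof (rule sum.cong)
    fix j assume "j \<in> Y"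
    then have "j \<in> {1..r}" using Y by blast
    then show "a i j = (if j \<in> {j\<in>{1..r}. a i j = 1} then 1 else 0)" using a_01[OF i] by auto
  qed simp
  also have "\<dots> = int (card (Y \<inter> {j\<in>{1..r}. a i j = 1}))"
    using \<open>finite Y\<close> by (simp add: sum.If_cases)
  finally show ?thesis using i by (simp add: support_point_def)
qed

lemma bit_support_point_expansion:
  assumes i: "i \<in> {1..n}" and Y: "Y \<subseteq> {1..r}"
  shows "bit (support_point Y i)
       = b i + (1 - 2 * b i) * (\<Sum>T\<in>Pow Y - {{}}. (-2) ^ (card T - 1) * (\<Prod>j\<in>T. a i j))"
proof -
  define A where "A = {j\<in>{1..r}. a i j = 1}"
  have "finite Y" using Y by (simp add: finite_subset)
  have "bit (support_point Y i) = bit (odd (int (card (Y \<inter> A)) + b i))"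
    unfolding A_def using support_point_eq_odd_card[OF i Y] by simp
  also have "\<dots> = b i + (1 - 2 * b i) * bit (odd (card (Y \<inter> A)))"
    using b_01[OF i] by (auto simp: bit_def)
  also have "bit (odd (card (Y \<inter> A))) = (\<Sum>T\<in>Pow (Y \<inter> A) - {{}}. (-2) ^ (card T - 1))"
    using \<open>finite Y\<close> by (simp add: bit_odd_card)
  also have "Pow (Y \<inter> A) - {{}} = {T\<in>Pow Y - {{}}. T \<subseteq> A}" by auto
  also have "(\<Sum>T\<in>{T\<in>Pow Y - {{}}. T \<subseteq> A}. (-2::int) ^ (card T - 1))
      = (\<Sum>T\<in>Pow Y - {{}}. if T \<subseteq> A then (-2) ^ (card T - 1) else 0)"
    using \<open>finite Y\<close> by (intro sum.inter_filter) simp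
  also have "\<dots> = (\<Sum>T\<in>Pow Y - {{}}. (-2) ^ (card T - 1) * (\<Prod>j\<in>T. a i j))"
  proof (rule sum.cong)
    fix T assume "T \<in> Pow Y - {{}}"
    then have "(\<Prod>j\<in>T. a i j) = bit (T \<subseteq> A)"
      using prod_column_eq_bit[OF i] Y unfolding A_def by blast
    then show "(if T \<subseteq> A then (-2) ^ (card T - 1) else 0) = (-2) ^ (card T - 1) * (\<Prod>j\<in>T. a i j)"
      by (simp add: bit_def)
  qed simp
  finally show ?thesis .
qed

lemma phase_cong:
  assumes "\<And>j. j \<in> {1..r} \<Longrightarrow> x j = y j"
  shows "phase x = phase y"
proof -
  have "(\<Sum>j=1..r. c {j} * bit (x j)) = (\<Sum>j=1..r. c {j} * bit (y j))"
    using assms by (intro sum.cong) auto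
  moreover have "(\<Sum>j=1..r. \<Sum>k=1..r. if j < k then c {j, k} * bit (x j) * bit (x k) else 0)
      = (\<Sum>j=1..r. \<Sum>k=1..r. if j < k then c {j, k} * bit (y j) * bit (y k) else 0)"
    using assms by (intro sum.cong refl) auto
  moreover have "(\<Sum>S \<in> {S. S \<subseteq> {1..r} \<and> 3 \<le> card S}. c S * (\<Prod>j\<in>S. bit (x j)))
      = (\<Sum>S \<in> {S. S \<subseteq> {1..r} \<and> 3 \<le> card S}. c S * (\<Prod>j\<in>S. bit (y j)))"
    using assms by (intro sum.cong prod.cong arg_cong[where f = "(*) _"] refl) auto
  ultimately show ?thesis unfolding phase_def by simp
qed

lemma phase_support_point_expansion:
  assumes Y: "Y \<subseteq> {1..r}"
  shows "phase (support_point Y) = (\<Sum>T\<in>Pow Y - {{}}. phase_weight (card T) * c T)"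
proof -
  have "phase (support_point Y) = phase (\<lambda>j. j \<in> Y)"
    by (rule phase_cong) (simp add: support_point_free[OF Y])
  also have "\<dots> = (\<Sum>j=1..r. c {j} * bit (j \<in> Y))
      + (\<Sum>j=1..r. \<Sum>k=1..r. if j < k then (2 * c {j, k}) * bit (j \<in> Y) * bit (k \<in> Y) else 0)
      + (\<Sum>S\<in>{S. S \<subseteq> {1..r} \<and> 3 \<le> card S}. (4 * c S) * (\<Prod>j\<in>S. bit (j \<in> Y)))"
    unfolding phase_def sum_distrib_left by (simp add: mult.assoc if_distrib cong: if_cong)
  also have "\<dots> = (\<Sum>T\<in>Pow Y - {{}}. multilinear_coeff (\<lambda>j. c {j}) (\<lambda>j k. 2 * c {j, k}) (\<lambda>S. 4 * c S) T)"
    by (rule multilinear_eq_sum_coeffs[OF Y])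
  also have "\<dots> = (\<Sum>T\<in>Pow Y - {{}}. phase_weight (card T) * c T)"
  proof (rule sum.cong)
    fix T :: "nat set"
    show "multilinear_coeff (\<lambda>j. c {j}) (\<lambda>j k. 2 * c {j, k}) (\<lambda>S. 4 * c S) T
        = phase_weight (card T) * c T"
      by (auto simp: multilinear_coeff_def phase_weight_def card_1_singleton_iff doubleton_Min_Max)
  qed simp
  finally show ?thesis .
qed

definition twisted_coeff :: "nat set \<Rightarrow> nat set \<Rightarrow> int" where
  "twisted_coeff U T =
     (\<Sum>i=1..n. bit (support_point U i) * (1 - 2 * b i) * (\<Prod>j\<in>T. a i j)) * (-2) ^ (card T - 1)
     + phase_weight (card T) * c T"

lemma twisted_phase_expansion:
  assumes Y: "Y \<subseteq> {1..r}"
  shows "twisted_phase U Y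
       = (\<Sum>i=1..n. bit (support_point U i) * b i) + (\<Sum>T\<in>Pow Y - {{}}. twisted_coeff U T)"
proof -
  let ?s = "\<lambda>i. bit (support_point U i)"
  let ?x = "\<lambda>i T. (-2::int) ^ (card T - 1) * (\<Prod>j\<in>T. a i j)"
  have "(\<Sum>i=1..n. ?s i * bit (support_point Y i))
      = (\<Sum>i=1..n. ?s i * b i + (\<Sum>T\<in>Pow Y - {{}}. ?s i * (1 - 2 * b i) * ?x i T))"
    using bit_support_point_expansion[OF _ Y]
    by (intro sum.cong refl) (simp add: sum_distrib_left algebra_simps)
  also have "\<dots> = (\<Sum>i=1..n. ?s i * b i) + (\<Sum>T\<in>Pow Y - {{}}. \<Sum>i=1..n. ?s i * (1 - 2 * b i) * ?x i T)"
    by (simp add: sum.distrib sum.swap[of _ "Pow Y - {{}}"])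
  also have "(\<Sum>T\<in>Pow Y - {{}}. \<Sum>i=1..n. ?s i * (1 - 2 * b i) * ?x i T)
      = (\<Sum>T\<in>Pow Y - {{}}. (\<Sum>i=1..n. ?s i * (1 - 2 * b i) * (\<Prod>j\<in>T. a i j)) * (-2) ^ (card T - 1))"
    by (simp add: sum_distrib_left sum_distrib_right mult_ac)
  finally show ?thesis
    unfolding twisted_phase_def phase_support_point_expansion[OF Y] twisted_coeff_def
    by (simp add: sum.distrib)
qed

definition column_sum :: "nat set \<Rightarrow> nat set \<Rightarrow> int" where
  "column_sum U T = (\<Sum>i=1..n. bit (support_point U i) * (\<Prod>j\<in>T. a i j))"

abbreviation twisted_parity_condition :: "nat set \<Rightarrow> nat set \<Rightarrow> bool" where
  "twisted_parity_condition U T \<equiv>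
     (if card T \<le> 3 then even (column_sum U T + c T) else even (c T))"

lemma phase_form_mod8_twisted_phase_iff:
  "phase_form_mod8 r (twisted_phase U)
     \<longleftrightarrow> (\<forall>T. T \<subseteq> {1..r} \<and> T \<noteq> {} \<longrightarrow> twisted_parity_condition U T)"
proof -
  have "coeff_modulus (card T) dvd twisted_coeff U T \<longleftrightarrow> twisted_parity_condition U T"
    if "T \<subseteq> {1..r}" "T \<noteq> {}" for T
  proof -
    let ?W = "\<Sum>i=1..n. bit (support_point U i) * b i * (\<Prod>j\<in>T. a i j)"
    have "card T \<noteq> 0" using that by (simp add: finite_subset)
    then have "coeff_modulus (card T) dvd (column_sum U T - 2 * ?W) * (-2) ^ (card T - 1)
        + phase_weight (card T) * c T
        \<longleftrightarrow> (if card T \<le> 3 then even (column_sum U T + c T) else even (c T))"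
      by (rule coeff_modulus_dvd_iff_parity)
    moreover have "(\<Sum>i=1..n. bit (support_point U i) * (1 - 2 * b i) * (\<Prod>j\<in>T. a i j))
        = column_sum U T - 2 * ?W"
      by (simp add: column_sum_def sum_distrib_left algebra_simps flip: sum_subtractf)
    ultimately show ?thesis unfolding twisted_coeff_def by simp
  qed
  then show ?thesis
    using phase_form_mod8_iff_coeff_modulus_dvd[OF twisted_phase_expansion] by auto
qed

lemma in_A_twisted_if_phase_form_mod8:
  assumes "phase_form_mod8 r (twisted_phase U)"
  shows "in_A n (twisted U)"
proof -
  obtain c0 l q where h: "\<forall>Y\<subseteq>{1..r}. 8 dvd (twisted_phase U Y - (c0 + 2 * quadratic_poly r l q Y))"
    using assms unfolding phase_form_mod8_def by blast
  define \<mu> where "\<mu> = lam * alpha powi c0"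
  have "\<mu> \<noteq> 0" unfolding \<mu>_def using lam alpha_nonzero by simp
  moreover have "twisted U x = \<mu> * \<i> powi
      ((\<Sum>j\<in>{1..r}. (l j + 2 * q j j) * bit (x j))
       + 2 * (\<Sum>j\<in>{1..r}. \<Sum>k\<in>{1..r}. if j < k then (q j k + q k j) * bit (x j) * bit (x k) else 0))"
    if "x \<in> supp n (twisted U)" for x
  proof -
    define Y where "Y = {j\<in>{1..r}. x j}"
    have Y: "Y \<subseteq> {1..r}" unfolding Y_def by blast
    have x: "x = support_point Y"
      unfolding Y_def using that supp_twisted by (metis support_point_of_supp)
    note quadratic_poly_of_bits[of r l q x, folded Y_def, symmetric]
    moreover have "alpha powi (twisted_phase U Y) = alpha powi (c0 + 2 * quadratic_poly r l q Y)"
      using h Y by (simp add: alpha_powi_eq_iff)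
    ultimately show ?thesis
      using twisted_support_point[OF Y] x
      by (simp add: \<mu>_def i_powi_eq_alpha_powi power_int_add alpha_nonzero)
  qed
  ultimately show ?thesis
    unfolding in_A_def using affine_sub_supp free_vars_supp
    by (intro disjI2 conjI exI[of _ "{1..r}"] exI[of _ \<mu>] exI[of _ "\<lambda>j. l j + 2 * q j j"]
        exI[of _ "\<lambda>j k. q j k + q k j"]) (simp_all add: supp_twisted)
qed

lemma quadratic_mod4_exponent_on_support_points:
  assumes "J \<subseteq> {1..n}"
  shows "quadratic_mod4 r (\<lambda>Y. (\<Sum>j\<in>J. l j * bit (support_point Y j))
     + 2 * (\<Sum>j\<in>J. \<Sum>k\<in>J. if j < k then q j k * bit (support_point Y j) * bit (support_point Y k) else 0))"
proof -
  define P where "P j Y = bit (odd ((\<Sum>i=1..r. a j i * bit (i \<in> Y)) + b j))" for j Y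
  have "finite J" using assms by (simp add: finite_subset)
  have P: "bit (support_point Y j) = P j Y" if "j \<in> J" for j Y
    using that assms unfolding P_def support_point_def by auto
  have "(\<Sum>j\<in>J. l j * bit (support_point Y j))
     + 2 * (\<Sum>j\<in>J. \<Sum>k\<in>J. if j < k then q j k * bit (support_point Y j) * bit (support_point Y k) else 0)
     = (\<Sum>j\<in>J. l j * P j Y) + (\<Sum>j\<in>J. \<Sum>k\<in>J. (if j < k then q j k else 0) * (2 * P j Y * P k Y))" for Y
    unfolding sum_distrib_left using P by (intro arg_cong2[where f = "(+)"] sum.cong refl) auto
  moreover have "quadratic_mod4 r (\<lambda>Y. (\<Sum>j\<in>J. l j * P j Y)
      + (\<Sum>j\<in>J. \<Sum>k\<in>J. (if j < k then q j k else 0) * (2 * P j Y * P k Y)))"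
    unfolding P_def using \<open>finite J\<close>
    by (intro quadratic_mod4_add quadratic_mod4_sum quadratic_mod4_mult
        quadratic_mod4_bit_odd quadratic_mod4_double_bit_odd_mult)
  ultimately show ?thesis by simp
qed

lemma phase_form_mod8_if_twisted_eq_i_powi:
  assumes eq: "\<And>Y. Y \<subseteq> {1..r} \<Longrightarrow> twisted U (support_point Y) = \<mu> * \<i> powi E Y"
    and "quadratic_mod4 r E"
  shows "phase_form_mod8 r (twisted_phase U)"
proof -
  define D where "D Y = twisted_phase U Y - 2 * E Y" for Y
  have DY: "lam * alpha powi (D Y) = \<mu>" if "Y \<subseteq> {1..r}" for Y
  proof -
    have "lam * alpha powi (twisted_phase U Y) = \<mu> * alpha powi (2 * E Y)"
      using eq[OF that] twisted_support_point[OF that] by (simp add: i_powi_eq_alpha_powi)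
    then show ?thesis
      unfolding D_def using alpha_nonzero by (simp add: power_int_diff field_simps)
  qed
  have D: "8 dvd (D Y - D {})" if "Y \<subseteq> {1..r}" for Y
  proof -
    have "lam * alpha powi (D Y) = lam * alpha powi (D {})" using DY[OF that] DY[of "{}"] by simp
    then show ?thesis using lam by (simp add: alpha_powi_eq_iff)
  qed
  obtain c1 l1 q1 where E: "\<forall>Y\<subseteq>{1..r}. 4 dvd (E Y - (c1 + quadratic_poly r l1 q1 Y))"
    using \<open>quadratic_mod4 r E\<close> unfolding quadratic_mod4_def by blast
  have "8 dvd (twisted_phase U Y - (D {} + 2 * c1 + 2 * quadratic_poly r l1 q1 Y))"
    if "Y \<subseteq> {1..r}" for Y
  proof -
    have diff: "twisted_phase U Y - (D {} + 2 * c1 + 2 * quadratic_poly r l1 q1 Y)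
        = (D Y - D {}) + 2 * (E Y - (c1 + quadratic_poly r l1 q1 Y))"
      unfolding D_def by (simp add: algebra_simps)
    have "4 dvd E Y - (c1 + quadratic_poly r l1 q1 Y)" using E that by blast
    then have "8 dvd 2 * (E Y - (c1 + quadratic_poly r l1 q1 Y))"
      using mult_dvd_mono[of "2::int" 2 4] by fastforce
    then show ?thesis unfolding diff by (intro dvd_add D[OF that])
  qed
  then show ?thesis unfolding phase_form_mod8_def by blast
qed

lemma phase_form_mod8_if_in_A_twisted:
  assumes "in_A n (twisted U)"
  shows "phase_form_mod8 r (twisted_phase U)"
proof -
  have "supp n (twisted U) \<noteq> {}" using support_point_in_supp[of "{}"] supp_twisted by auto
  then obtain J \<mu> l q where J: "free_vars n (supp n (twisted U)) J"
    and form: "\<forall>x \<in> supp n (twisted U). twisted U x = \<mu> * \<i> powi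
             ((\<Sum>j\<in>J. l j * bit (x j))
              + 2 * (\<Sum>j\<in>J. \<Sum>k\<in>J. if j < k then q j k * bit (x j) * bit (x k) else 0))"
    using assms unfolding in_A_def by blast
  show ?thesis
  proof (rule phase_form_mod8_if_twisted_eq_i_powi)
    show "twisted U (support_point Y) = \<mu> * \<i> powi ((\<Sum>j\<in>J. l j * bit (support_point Y j))
       + 2 * (\<Sum>j\<in>J. \<Sum>k\<in>J. if j < k then q j k * bit (support_point Y j) * bit (support_point Y k) else 0))"
      if "Y \<subseteq> {1..r}" for Y
      using form support_point_in_supp[OF that] supp_twisted by blast
    have "J \<subseteq> {1..n}" using J unfolding free_vars_def by blast
    then show "quadratic_mod4 r (\<lambda>Y. (\<Sum>j\<in>J. l j * bit (support_point Y j))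
       + 2 * (\<Sum>j\<in>J. \<Sum>k\<in>J. if j < k then q j k * bit (support_point Y j) * bit (support_point Y k) else 0))"
      by (rule quadratic_mod4_exponent_on_support_points)
  qed
qed

section \<open>The parity conditions\<close>

lemma a_mult_prod_column:
  assumes "i \<in> {1..n}" and "k \<in> {1..r}" and "T \<subseteq> {1..r}"
  shows "a i k * (\<Prod>j\<in>T. a i j) = (\<Prod>j\<in>insert k T. a i j)"
proof -
  have "finite T" using assms(3) by (simp add: finite_subset)
  show ?thesis
  proof (cases "k \<in> T")
    case True
    have "a i k * a i k = a i k" using a_01[OF assms(1,2)] by auto
    then show ?thesis
      using True \<open>finite T\<close> by (simp add: prod.remove insert_absorb mult.assoc[symmetric])
  qed (simp add: \<open>finite T\<close>)
qed

lemma column_sum_cong: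
  assumes U: "U \<subseteq> {1..r}" and T: "T \<subseteq> {1..r}"
  shows "even (column_sum U T - ((\<Sum>i=1..n. (\<Prod>j\<in>T. a i j) * b i)
                                + (\<Sum>k\<in>U. \<Sum>i=1..n. \<Prod>j\<in>insert k T. a i j)))"
proof -
  define v where "v i = (\<Sum>k\<in>U. a i k) + b i" for i
  have "even (bit (support_point U i) - v i)" if "i \<in> {1..n}" for i
  proof -
    have "(\<Sum>j=1..r. a i j * bit (j \<in> U)) = (\<Sum>k\<in>U. a i k)" using U by (simp add: sum_mult_bit_mem)
    then have "support_point U i = odd (v i)" using that by (simp add: support_point_def v_def)
    then show ?thesis using even_bit_odd_diff[of "v i"] by simp
  qed
  then have "even (\<Sum>i=1..n. (bit (support_point U i) - v i) * (\<Prod>j\<in>T. a i j))"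
    by (intro dvd_sum) simp
  moreover have "(\<Sum>i=1..n. (bit (support_point U i) - v i) * (\<Prod>j\<in>T. a i j))
      = column_sum U T - (\<Sum>i=1..n. v i * (\<Prod>j\<in>T. a i j))"
    by (simp add: column_sum_def algebra_simps sum_subtractf)
  moreover have "(\<Sum>i=1..n. v i * (\<Prod>j\<in>T. a i j))
      = (\<Sum>i=1..n. (\<Prod>j\<in>T. a i j) * b i) + (\<Sum>k\<in>U. \<Sum>i=1..n. \<Prod>j\<in>insert k T. a i j)"
  proof -
    have "(\<Sum>i=1..n. v i * (\<Prod>j\<in>T. a i j))
        = (\<Sum>i=1..n. (\<Prod>j\<in>T. a i j) * b i) + (\<Sum>i=1..n. \<Sum>k\<in>U. a i k * (\<Prod>j\<in>T. a i j))"
      unfolding v_def by (simp add: sum.distrib[symmetric] sum_distrib_right algebra_simps)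
    also have "(\<Sum>i=1..n. \<Sum>k\<in>U. a i k * (\<Prod>j\<in>T. a i j)) = (\<Sum>i=1..n. \<Sum>k\<in>U. \<Prod>j\<in>insert k T. a i j)"
      using a_mult_prod_column T U by (intro sum.cong refl) blast
    finally show ?thesis by (simp add: sum.swap[of _ U])
  qed
  ultimately show ?thesis by simp
qed

lemma conditions_if_twisted_parity_conditions:
  assumes h: "\<And>U T. U \<subseteq> {1..r} \<Longrightarrow> T \<subseteq> {1..r} \<Longrightarrow> T \<noteq> {} \<Longrightarrow> twisted_parity_condition U T"
  shows "(\<forall>S. S \<subseteq> {1..r} \<and> 4 \<le> card S \<longrightarrow> even (c S))"
    and "(\<forall>S. S \<subseteq> {1..r} \<and> 1 \<le> card S \<and> card S \<le> 3 \<longrightarrow>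
           (\<Sum>i=1..n. (\<Prod>j\<in>S. a i j) * b i) mod 2 = c S mod 2)"
    and "(\<forall>S. S \<subseteq> {1..r} \<and> 1 \<le> card S \<and> card S \<le> 4 \<longrightarrow> even (\<Sum>i=1..n. \<Prod>j\<in>S. a i j))"
proof -
  show "\<forall>S. S \<subseteq> {1..r} \<and> 4 \<le> card S \<longrightarrow> even (c S)"
  proof (intro allI impI)
    fix S assume S: "S \<subseteq> {1..r} \<and> 4 \<le> card S"
    then have "S \<noteq> {}" by auto
    then show "even (c S)" using h[of "{}" S] S by simp
  qed
  have low: "even ((\<Sum>i=1..n. (\<Prod>j\<in>S. a i j) * b i) + c S)"
    if "S \<subseteq> {1..r}" "1 \<le> card S" "card S \<le> 3" for S
  proof -
    have "S \<noteq> {}" using that by auto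
    then have "even (column_sum {} S + c S)" using h[of "{}" S] that by simp
    moreover have "even (column_sum {} S - (\<Sum>i=1..n. (\<Prod>j\<in>S. a i j) * b i))"
      using column_sum_cong[of "{}" S] that by simp
    ultimately show ?thesis by presburger
  qed
  then show "\<forall>S. S \<subseteq> {1..r} \<and> 1 \<le> card S \<and> card S \<le> 3 \<longrightarrow>
      (\<Sum>i=1..n. (\<Prod>j\<in>S. a i j) * b i) mod 2 = c S mod 2"
    unfolding even_add_iff_mod2_eq by blast
  show "\<forall>S. S \<subseteq> {1..r} \<and> 1 \<le> card S \<and> card S \<le> 4 \<longrightarrow> even (\<Sum>i=1..n. \<Prod>j\<in>S. a i j)"
  proof (intro allI impI)
    fix S assume S: "S \<subseteq> {1..r} \<and> 1 \<le> card S \<and> card S \<le> 4"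
    then obtain k where k: "k \<in> S" by fastforce
    define T where "T = (if card S = 1 then S else S - {k})"
    have "finite S" using S finite_subset[of S "{1..r}"] by blast
    then have T: "T \<subseteq> {1..r}" "1 \<le> card T" "card T \<le> 3" "insert k T = S"
      using S k by (auto simp: T_def card_Diff_singleton)
    have "k \<in> {1..r}" using S k by blast
    moreover have "T \<noteq> {}" using T by auto
    ultimately have "even (column_sum {k} T + c T)" using h[of "{k}" T] T by simp
    moreover have "even (column_sum {k} T
        - ((\<Sum>i=1..n. (\<Prod>j\<in>T. a i j) * b i) + (\<Sum>i=1..n. \<Prod>j\<in>S. a i j)))"
      using column_sum_cong[of "{k}" T] T \<open>k \<in> {1..r}\<close> by simp
    moreover have "even ((\<Sum>i=1..n. (\<Prod>j\<in>T. a i j) * b i) + c T)" using low T by blast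
    ultimately show "even (\<Sum>i=1..n. \<Prod>j\<in>S. a i j)" by presburger
  qed
qed

lemma twisted_parity_condition_if_conditions:
  assumes A: "\<forall>S. S \<subseteq> {1..r} \<and> 4 \<le> card S \<longrightarrow> even (c S)"
    and B: "\<forall>S. S \<subseteq> {1..r} \<and> 1 \<le> card S \<and> card S \<le> 4 \<longrightarrow> even (\<Sum>i=1..n. \<Prod>j\<in>S. a i j)"
    and C: "\<forall>S. S \<subseteq> {1..r} \<and> 1 \<le> card S \<and> card S \<le> 3 \<longrightarrow>
              (\<Sum>i=1..n. (\<Prod>j\<in>S. a i j) * b i) mod 2 = c S mod 2"
    and U: "U \<subseteq> {1..r}" and T: "T \<subseteq> {1..r}" "T \<noteq> {}"
  shows "twisted_parity_condition U T"
proof (cases "card T \<le> 3")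
  case False
  then show ?thesis using A T by simp
next
  case True
  have "finite T" using T(1) by (simp add: finite_subset)
  then have "1 \<le> card T" using T(2) by (simp add: Suc_le_eq card_gt_0_iff)
  let ?y = "\<Sum>i=1..n. (\<Prod>j\<in>T. a i j) * b i" and ?z = "\<Sum>k\<in>U. \<Sum>i=1..n. \<Prod>j\<in>insert k T. a i j"
  have "even (column_sum U T - (?y + ?z))" using column_sum_cong[OF U T(1)] .
  moreover have "even (?y + c T)"
    using C T(1) True \<open>1 \<le> card T\<close> unfolding even_add_iff_mod2_eq by blast
  moreover have "even ?z"
  proof (rule dvd_sum)
    fix k assume "k \<in> U"
    have "card (insert k T) \<le> card T + 1" "1 \<le> card (insert k T)"
      using \<open>finite T\<close> \<open>1 \<le> card T\<close> by (simp_all add: card_insert_if)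
    moreover have "insert k T \<subseteq> {1..r}" using \<open>k \<in> U\<close> U T(1) by blast
    ultimately show "even (\<Sum>i=1..n. \<Prod>j\<in>insert k T. a i j)" using B True by simp
  qed
  moreover have "even (x - (y + z)) \<Longrightarrow> even (y + w) \<Longrightarrow> even z \<Longrightarrow> even (x + w)"
    for x y z w :: int by presburger
  ultimately have "even (column_sum U T + c T)" by blast
  then show ?thesis using True by simp
qed

lemma twisted_parity_conditions_iff:
  "(\<forall>U T. U \<subseteq> {1..r} \<longrightarrow> T \<subseteq> {1..r} \<longrightarrow> T \<noteq> {} \<longrightarrow> twisted_parity_condition U T)
   \<longleftrightarrow> (\<forall>S. S \<subseteq> {1..r} \<and> 4 \<le> card S \<longrightarrow> even (c S))
     \<and> (\<forall>S. S \<subseteq> {1..r} \<and> 1 \<le> card S \<and> card S \<le> 4 \<longrightarrow> even (\<Sum>i=1..n. \<Prod>j\<in>S. a i j))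
     \<and> (\<forall>S. S \<subseteq> {1..r} \<and> 1 \<le> card S \<and> card S \<le> 3 \<longrightarrow>
           (\<Sum>i=1..n. (\<Prod>j\<in>S. a i j) * b i) mod 2 = c S mod 2)"
  (is "_ \<longleftrightarrow> ?conditions")
proof
  assume "\<forall>U T. U \<subseteq> {1..r} \<longrightarrow> T \<subseteq> {1..r} \<longrightarrow> T \<noteq> {} \<longrightarrow> twisted_parity_condition U T"
  note conds = conditions_if_twisted_parity_conditions[OF this[rule_format]]
  show ?conditions by (rule conjI[OF conds(1) conjI[OF conds(3) conds(2)]])
next
  assume conds: ?conditions
  show "\<forall>U T. U \<subseteq> {1..r} \<longrightarrow> T \<subseteq> {1..r} \<longrightarrow> T \<noteq> {} \<longrightarrow> twisted_parity_condition U T"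
  proof (intro allI impI)
    fix U T assume "U \<subseteq> {1..r}" "T \<subseteq> {1..r}" "T \<noteq> {}"
    then show "twisted_parity_condition U T"
      by (rule twisted_parity_condition_if_conditions[OF conds[THEN conjunct1]
            conds[THEN conjunct2, THEN conjunct1] conds[THEN conjunct2, THEN conjunct2]])
  qed
qed

end

theorem theorem3p4:
  fixes n r :: nat
    and f :: "(nat \<Rightarrow> bool) \<Rightarrow> complex"
    and a :: "nat \<Rightarrow> nat \<Rightarrow> int" and b :: "nat \<Rightarrow> int"
    and c :: "nat set \<Rightarrow> int"
    and lam :: complex
  assumes rn: "r \<le> n"
    and a01: "\<forall>i\<in>{1..n}. \<forall>j\<in>{1..r}. a i j \<in> {0, 1}"
    and b01: "\<forall>i\<in>{1..n}. b i \<in> {0, 1}"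
    and aI: "\<forall>i\<in>{1..r}. \<forall>j\<in>{1..r}. a i j = (if i = j then 1 else 0)"
    and b0: "\<forall>i\<in>{1..r}. b i = 0"
    and supp_f: "supp n f = {x \<in> cube n. \<forall>i\<in>{1..n}.
                    x i = odd ((\<Sum>j=1..r. a i j * bit (x j)) + b i)}"
    and lam: "lam \<noteq> 0"
    and f_form: "\<forall>x \<in> cube n. f x =
        (if x \<in> supp n f then
           lam * alpha powi
             ((\<Sum>j=1..r. c {j} * bit (x j))
              + 2 * (\<Sum>j=1..r. \<Sum>k=1..r. if j < k then c {j, k} * bit (x j) * bit (x k) else 0)
              + 4 * (\<Sum>S \<in> {S. S \<subseteq> {1..r} \<and> 3 \<le> card S}. c S * (\<Prod>j\<in>S. bit (x j))))
         else 0)"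
  shows "in_L n f \<longleftrightarrow>
           (\<forall>S. S \<subseteq> {1..r} \<and> 4 \<le> card S \<longrightarrow> even (c S))
         \<and> (\<forall>S. S \<subseteq> {1..r} \<and> 1 \<le> card S \<and> card S \<le> 4 \<longrightarrow>
               even (\<Sum>i=1..n. \<Prod>j\<in>S. a i j))
         \<and> (\<forall>S. S \<subseteq> {1..r} \<and> 1 \<le> card S \<and> card S \<le> 3 \<longrightarrow>
               (\<Sum>i=1..n. (\<Prod>j\<in>S. a i j) * b i) mod 2 = c S mod 2)"
  (is "_ \<longleftrightarrow> ?conditions")
proof -
  interpret affine_support_phase n r f a b c lam
    unfolding affine_support_phase_def using assms by (intro conjI)
  have "in_L n f \<longleftrightarrow> (\<forall>U. U \<subseteq> {1..r} \<longrightarrow> phase_form_mod8 r (twisted_phase U))"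
    unfolding in_L_iff_in_A_twisted
    using in_A_twisted_if_phase_form_mod8 phase_form_mod8_if_in_A_twisted by blast
  also have "\<dots> \<longleftrightarrow> (\<forall>U T. U \<subseteq> {1..r} \<longrightarrow> T \<subseteq> {1..r} \<longrightarrow> T \<noteq> {} \<longrightarrow> twisted_parity_condition U T)"
    unfolding phase_form_mod8_twisted_phase_iff by blast
  also have "\<dots> \<longleftrightarrow> ?conditions"
    by (rule twisted_parity_conditions_iff)
  finally show ?thesis .
qed

end
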